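(* Let $\mathbb{K}$ be a field, let $S\subseteq\mathbb{K}$ be a finite set with $0\in S$ and $|S|\ge k+1$, and let $f\in\mathbb{K}[x_1,\ldots,x_n]$ have total degree at most $k$. Then $f\equiv 0$ if and only if $f(a)=0$ for all $a\in W^k_n(S)$.
   Context: $W^k_n(S)$ denotes the set of vectors $a\in S^n$ having at most $k$ nonzero coordinates (Hamming weight at most $k$). *)

theory Defs
  imports Main "HOL-Library.Poly_Mapping"
begin

text \<open>Multivariate polynomials over a field in variables x_0, x_1, ... represented as
  finitely supported maps from monomials (finitely supported exponent vectors) to coefficients.\<close>

type_synonym 'a mpoly_rep = "(nat \<Rightarrow>\<^sub>0 nat) \<Rightarrow>\<^sub>0 'a"

definition mono_deg :: "(nat \<Rightarrow>\<^sub>0 nat) \<Rightarrow> nat" where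
  "mono_deg m = (\<Sum>i\<in>Poly_Mapping.keys m. Poly_Mapping.lookup m i)"

definition total_degree :: "'a::zero mpoly_rep \<Rightarrow> nat" where
  "total_degree p = Max (insert 0 (mono_deg ` Poly_Mapping.keys p))"

definition in_vars :: "nat \<Rightarrow> 'a::zero mpoly_rep \<Rightarrow> bool" where
  "in_vars n p \<longleftrightarrow> (\<forall>m\<in>Poly_Mapping.keys p. Poly_Mapping.keys m \<subseteq> {..<n})"

definition eval_mpoly :: "'a::comm_semiring_1 mpoly_rep \<Rightarrow> (nat \<Rightarrow> 'a) \<Rightarrow> 'a" where
  "eval_mpoly p a = (\<Sum>m\<in>Poly_Mapping.keys p. Poly_Mapping.lookup p m * (\<Prod>i\<in>Poly_Mapping.keys m. a i ^ Poly_Mapping.lookup m i))"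

text \<open>W^k_n(S): vectors a in S^n (coordinates x_0..x_(n-1); padded with 0 beyond n)
  with at most k nonzero coordinates.\<close>
definition W :: "nat \<Rightarrow> nat \<Rightarrow> 'a::zero set \<Rightarrow> (nat \<Rightarrow> 'a) set" where
  "W k n S = {a. (\<forall>i<n. a i \<in> S) \<and> (\<forall>i\<ge>n. a i = 0) \<and> card {i. i < n \<and> a i \<noteq> 0} \<le> k}"

end

theory Submission
  imports Defs "HOL-Computational_Algebra.Polynomial"
begin

(* The induction is on the number n of variables.  Grouping the monomials by the exponent j
   of the last variable x_n writes the polynomial as  sum_j G_j(x_0..x_(n-1)) * x_n^j.
   - For j = 0: points of W^k_n(S) with x_n = 0 lie in W^k_(n+1)(S), so G_0 vanishes on W^k_n(S).
   - For j >= 1: extending a point of W^(k-1)_n(S) by any x_n = t in S stays in W^k_(n+1)(S),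
     so the univariate polynomial t |-> sum_j G_j * t^j (degree <= k) has |S| > k roots and
     all G_j vanish on W^(k-1)_n(S), hence on W^(k-j)_n(S).
   Since G_j has degree <= k - j and |S| > k - j, the induction hypothesis kills its
   coefficients. *)

lemma univariate_coeffs_zero:
  fixes a :: "nat \<Rightarrow> 'a::{comm_ring_1,ring_no_zero_divisors}"
  assumes card: "card S > k" and vanish: "\<And>t. t \<in> S \<Longrightarrow> (\<Sum>i\<le>k. a i * t ^ i) = 0"
    and "j \<le> k"
  shows "a j = 0"
proof -
  define p where "p = (\<Sum>i\<le>k. monom (a i) i)"
  have "degree p \<le> k"
    unfolding p_def by (intro degree_sum_le) (auto intro: order.trans[OF degree_monom_le])
  moreover have "poly p t = poly 0 t" if "t \<in> S" for t
    using vanish[OF that] by (simp add: p_def poly_sum poly_monom)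
  ultimately have "p = 0"
    using card by (intro poly_eqI_degree[of S]) auto
  hence "coeff p j = 0" by simp
  thus ?thesis using \<open>j \<le> k\<close> by (simp add: p_def coeff_sum)
qed

lemma W_mono: "k \<le> k' \<Longrightarrow> W k n S \<subseteq> W k' n S"
  unfolding W_def by (auto intro: le_trans)

lemma W_Suc_of_W:
  assumes "x \<in> W k n S" and "0 \<in> S"
  shows "x \<in> W k (Suc n) S"
proof -
  have "{i. i < Suc n \<and> x i \<noteq> 0} = {i. i < n \<and> x i \<noteq> 0}"
    using assms(1) unfolding W_def by (auto simp: less_Suc_eq)
  with assms show ?thesis
    unfolding W_def by (auto simp: less_Suc_eq)
qed

lemma W_upd:
  assumes b: "b \<in> W k n S" and t: "t \<in> S"
  shows "b(n := t) \<in> W (Suc k) (Suc n) S"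
proof -
  have "card {i. i < Suc n \<and> (b(n := t)) i \<noteq> 0} \<le> card (insert n {i. i < n \<and> b i \<noteq> 0})"
    by (intro card_mono) (auto simp: less_Suc_eq)
  also have "\<dots> \<le> Suc (card {i. i < n \<and> b i \<noteq> 0})"
    by (simp add: card_insert_if)
  finally show ?thesis
    using b t unfolding W_def by (auto simp: less_Suc_eq)
qed

definition mono_sum ::
    "'m set \<Rightarrow> ('m \<Rightarrow> 'a::comm_semiring_1) \<Rightarrow> ('m \<Rightarrow> nat \<Rightarrow> nat) \<Rightarrow> nat \<Rightarrow> (nat \<Rightarrow> 'a) \<Rightarrow> 'a"
  where "mono_sum M c ex n x = (\<Sum>m\<in>M. c m * (\<Prod>i<n. x i ^ ex m i))"

lemma mono_sum_expand_last:
  assumes "finite M" and "\<forall>m\<in>M. ex m n \<le> d"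
  shows "mono_sum M c ex (Suc n) (x(n := t)) =
           (\<Sum>j\<le>d. mono_sum {m\<in>M. ex m n = j} c ex n x * t ^ j)"
proof -
  have "mono_sum M c ex (Suc n) (x(n := t)) = (\<Sum>m\<in>M. c m * (\<Prod>i<n. x i ^ ex m i) * t ^ ex m n)"
    unfolding mono_sum_def by (intro sum.cong refl) (simp add: lessThan_Suc mult_ac)
  also have "\<dots> = (\<Sum>j\<le>d. \<Sum>m\<in>{m\<in>M. ex m n = j}. c m * (\<Prod>i<n. x i ^ ex m i) * t ^ ex m n)"
    using assms by (intro sum.group[symmetric]) auto
  also have "\<dots> = (\<Sum>j\<le>d. mono_sum {m\<in>M. ex m n = j} c ex n x * t ^ j)"
    unfolding mono_sum_def sum_distrib_right by (intro sum.cong refl) auto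
  finally show ?thesis .
qed

lemma slice_zero_vanishes:
  assumes "finite M" and "\<forall>m\<in>M. ex m n \<le> k" and "0 \<in> S"
    and vanish: "\<forall>y\<in>W k (Suc n) S. mono_sum M c ex (Suc n) y = 0"
    and x: "x \<in> W k n S"
  shows "mono_sum {m\<in>M. ex m n = 0} c ex n x = 0"
proof -
  have "x(n := 0) = x" using x unfolding W_def by auto
  hence "mono_sum M c ex (Suc n) x = (\<Sum>j\<le>k. mono_sum {m\<in>M. ex m n = j} c ex n x * 0 ^ j)"
    using mono_sum_expand_last[where M = M and ex = ex and n = n and d = k, OF assms(1,2), of c x 0]
    by simp
  also have "\<dots> = mono_sum {m\<in>M. ex m n = 0} c ex n x"
    by (simp add: sum.atMost_shift)
  finally show ?thesis
    using vanish W_Suc_of_W[OF x \<open>0 \<in> S\<close>] by simp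
qed

lemma slices_vanish:
  fixes c :: "'m \<Rightarrow> 'a::{comm_ring_1,ring_no_zero_divisors}"
  assumes "finite M" and "\<forall>m\<in>M. ex m n \<le> Suc k" and card: "card S > Suc k"
    and vanish: "\<forall>y\<in>W (Suc k) (Suc n) S. mono_sum M c ex (Suc n) y = 0"
    and x: "x \<in> W k n S" and "j \<le> Suc k"
  shows "mono_sum {m\<in>M. ex m n = j} c ex n x = 0"
proof (rule univariate_coeffs_zero[OF card _ \<open>j \<le> Suc k\<close>])
  fix t assume "t \<in> S"
  hence "mono_sum M c ex (Suc n) (x(n := t)) = 0"
    using vanish W_upd[OF x] by blast
  thus "(\<Sum>i\<le>Suc k. mono_sum {m\<in>M. ex m n = i} c ex n x * t ^ i) = 0"
    by (simp only: mono_sum_expand_last[where M = M and ex = ex and n = n and d = "Suc k", OF assms(1,2)])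
qed

lemma slice_vanishes:
  fixes c :: "'m \<Rightarrow> 'a::{comm_ring_1,ring_no_zero_divisors}"
  assumes "finite M" and "\<forall>m\<in>M. ex m n \<le> k" and "0 \<in> S" and "card S > k"
    and "\<forall>y\<in>W k (Suc n) S. mono_sum M c ex (Suc n) y = 0"
    and x: "x \<in> W (k - j) n S" and "j \<le> k"
  shows "mono_sum {m\<in>M. ex m n = j} c ex n x = 0"
proof (cases j)
  case 0
  thus ?thesis using slice_zero_vanishes assms by simp
next
  case (Suc j')
  then obtain k' where k: "k = Suc k'" using \<open>j \<le> k\<close> by (cases k) auto
  have "k - j \<le> k'" using Suc k by simp
  hence "x \<in> W k' n S" using W_mono x by blast
  thus ?thesis using slices_vanish[of M ex n k'] assms k by simp
qed

lemma mono_sum_vanishing_coeffs: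
  fixes c :: "'m \<Rightarrow> 'a::{comm_ring_1,ring_no_zero_divisors}"
  assumes "0 \<in> S"
  shows "\<lbrakk>finite M; card S > k;
          \<forall>m\<in>M. \<forall>m'\<in>M. (\<forall>i<n. ex m i = ex m' i) \<longrightarrow> m = m';
          \<forall>m\<in>M. (\<Sum>i<n. ex m i) \<le> k;
          \<forall>x\<in>W k n S. mono_sum M c ex n x = 0; m \<in> M\<rbrakk> \<Longrightarrow> c m = 0"
proof (induction n arbitrary: k M m)
  case 0
  have "(\<lambda>_. 0) \<in> W k 0 S" unfolding W_def by simp
  hence "mono_sum M c ex 0 (\<lambda>_. 0) = 0" using "0.prems"(5) by blast
  moreover have "M = {m}" using "0.prems"(3,6) by blast
  ultimately show ?case by (simp add: mono_sum_def)
next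
  case (Suc n)
  define j where "j = ex m n"
  have deg: "(\<Sum>i<n. ex m' i) + ex m' n \<le> k" if "m' \<in> M" for m'
    using Suc.prems(4) that by (simp add: lessThan_Suc add.commute)
  show ?case
  proof (rule Suc.IH[of "{m'\<in>M. ex m' n = j}" "k - j"])
    show "finite {m'\<in>M. ex m' n = j}" using Suc.prems(1) by simp
    show "card S > k - j" using Suc.prems(2) by simp
    show "\<forall>m'\<in>{m'\<in>M. ex m' n = j}. \<forall>m''\<in>{m'\<in>M. ex m' n = j}.
            (\<forall>i<n. ex m' i = ex m'' i) \<longrightarrow> m' = m''"
      using Suc.prems(3) by (auto simp: less_Suc_eq)
    show "\<forall>m'\<in>{m'\<in>M. ex m' n = j}. (\<Sum>i<n. ex m' i) \<le> k - j"
      by (auto dest!: deg)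
    show "\<forall>x\<in>W (k - j) n S. mono_sum {m'\<in>M. ex m' n = j} c ex n x = 0"
      using slice_vanishes[OF Suc.prems(1) _ assms Suc.prems(2,5)] deg Suc.prems(6)
      unfolding j_def by fastforce
    show "m \<in> {m'\<in>M. ex m' n = j}" using Suc.prems(6) j_def by simp
  qed
qed

text \<open>For a polynomial in x_0, ..., x_(n-1), the product over the support of a monomial
  can be taken over all of x_0, ..., x_(n-1), so f evaluates as a monomial family.\<close>
lemma eval_mpoly_as_mono_sum:
  assumes "in_vars n f"
  shows "eval_mpoly f x = mono_sum (Poly_Mapping.keys f) (Poly_Mapping.lookup f) Poly_Mapping.lookup n x"
  unfolding eval_mpoly_def mono_sum_def
proof (intro sum.cong refl arg_cong2[where f = "(*)"])
  fix m assume "m \<in> Poly_Mapping.keys f"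
  hence "Poly_Mapping.keys m \<subseteq> {..<n}" using assms unfolding in_vars_def by blast
  thus "(\<Prod>i\<in>Poly_Mapping.keys m. x i ^ Poly_Mapping.lookup m i) = (\<Prod>i<n. x i ^ Poly_Mapping.lookup m i)"
    by (intro prod.mono_neutral_left) (auto simp: in_keys_iff)
qed

lemma monomial_degree_le:
  assumes "in_vars n f" and "m \<in> Poly_Mapping.keys f"
  shows "(\<Sum>i<n. Poly_Mapping.lookup m i) \<le> total_degree f"
proof -
  have "Poly_Mapping.keys m \<subseteq> {..<n}" using assms unfolding in_vars_def by blast
  hence "(\<Sum>i<n. Poly_Mapping.lookup m i) = mono_deg m"
    unfolding mono_deg_def by (intro sum.mono_neutral_left[symmetric]) (auto simp: in_keys_iff)
  also have "\<dots> \<le> total_degree f"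
    unfolding total_degree_def using assms(2) by (intro Max_ge) auto
  finally show ?thesis .
qed

lemma monomials_determined_by_vars:
  assumes "in_vars n f" and "m \<in> Poly_Mapping.keys f" and "m' \<in> Poly_Mapping.keys f"
    and "\<forall>i<n. Poly_Mapping.lookup m i = Poly_Mapping.lookup m' i"
  shows "m = m'"
proof (rule poly_mapping_eqI)
  fix i
  have outside: "Poly_Mapping.lookup u i = 0" if "u \<in> Poly_Mapping.keys f" and "\<not> i < n" for u
    using assms(1) that unfolding in_vars_def by (meson lessThan_iff subsetD in_keys_iff)
  show "Poly_Mapping.lookup m i = Poly_Mapping.lookup m' i"
    using assms(2-4) outside by (cases "i < n") auto
qed

theorem lemma4:
  fixes f :: "'a::field mpoly_rep" and S :: "'a set" and n k :: nat
  assumes "finite S" and "0 \<in> S" and "card S \<ge> k + 1"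
    and "in_vars n f" and "total_degree f \<le> k"
  shows "f = 0 \<longleftrightarrow> (\<forall>a\<in>W k n S. eval_mpoly f a = 0)"
proof
  assume "f = 0"
  thus "\<forall>a\<in>W k n S. eval_mpoly f a = 0" by (simp add: eval_mpoly_def)
next
  assume vanish: "\<forall>a\<in>W k n S. eval_mpoly f a = 0"
  have "Poly_Mapping.lookup f m = 0" if "m \<in> Poly_Mapping.keys f" for m
  proof (rule mono_sum_vanishing_coeffs[OF \<open>0 \<in> S\<close> _ _ _ _ _ that])
    show "card S > k" using assms(3) by simp
    show "\<forall>m\<in>Poly_Mapping.keys f. \<forall>m'\<in>Poly_Mapping.keys f.
            (\<forall>i<n. Poly_Mapping.lookup m i = Poly_Mapping.lookup m' i) \<longrightarrow> m = m'"
      using monomials_determined_by_vars[OF assms(4)] by blast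
    show "\<forall>m\<in>Poly_Mapping.keys f. (\<Sum>i<n. Poly_Mapping.lookup m i) \<le> k"
      using monomial_degree_le[OF assms(4)] assms(5) order.trans by blast
    show "\<forall>x\<in>W k n S. mono_sum (Poly_Mapping.keys f) (Poly_Mapping.lookup f) Poly_Mapping.lookup n x = 0"
      using vanish eval_mpoly_as_mono_sum[OF assms(4)] by simp
  qed simp
  thus "f = 0" by (metis in_keys_iff keys_eq_empty equals0I)
qed

end
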